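(* Let $q\ge5$ be a prime power with $q\equiv\xi\pmod 3$, $\xi\in\{-1,0,1\}$, and let $\mathcal{C}_\mathscr{C}$ be the $[q+1,q-3,5]_q$ code with parity check matrix whose columns are the vectors $(1,t,t^2,t^3)$, $t\in\mathbb{F}_q$, and $(0,0,0,1)$. Let $w\in\{3,\ldots,\lfloor (q+3)/2\rfloor\}$. (i) If $(W,\xi)\in\{(2,1),(3,1),(3,0)\}$ and $\mathcal{V}^{(W)}_a,\mathcal{V}^{(W)}_b$ are weight-$W$ cosets of $\mathcal{C}_\mathscr{C}$ representing the two distinct weight distributions of weight-$W$ cosets, then $$B_{q+4-w}(\mathcal{V}^{(W)}_a)-(-1)^qB_w(\mathcal{V}^{(W)}_a)=B_{q+4-w}(\mathcal{V}^{(W)}_b)-(-1)^qB_w(\mathcal{V}^{(W)}_b).$$ (ii) If $\xi=-1$ and $\mathcal{V}^{(3)}_a,\mathcal{V}^{(3)}_b,\mathcal{V}^{(3)}_c$ are weight-$3$ cosets of $\mathcal{C}_\mathscr{C}$ representing the three distinct weight distributions of weight-$3$ cosets, then $$B_{q+4-w}(\mathcal{V}^{(3)}_a)-(-1)^qB_w(\mathcal{V}^{(3)}_a)=B_{q+4-w}(\mathcal{V}^{(3)}_b)-(-1)^qB_w(\mathcal{V}^{(3)}_b)=B_{q+4-w}(\mathcal{V}^{(3)}_c)-(-1)^qB_w(\mathcal{V}^{(3)}_c).$$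
   Context: A coset of a linear code $\mathcal{C}\subseteq\mathbb{F}_q^n$ is a set $\mathbf{v}+\mathcal{C}$; its weight is the minimum Hamming weight of its vectors. $B_w(\mathcal{V})$ is the number of vectors of Hamming weight $w$ in the coset $\mathcal{V}$. For $(W,\xi)\in\{(2,1),(3,1),(3,0)\}$ the weight-$W$ cosets of $\mathcal{C}_\mathscr{C}$ have exactly two distinct weight distributions, and for $\xi=-1$ the weight-$3$ cosets have exactly three distinct weight distributions. *)

theory Defs
  imports Main
begin

text \<open>Coordinates of F_q^(q+1) are indexed by 'a option: Some t for t in F_q,
  None for the extra column (0,0,0,1).  Vectors are functions 'a option => 'a.\<close>

definition pcm_col :: "'a::field option \<Rightarrow> nat \<Rightarrow> 'a" where
  "pcm_col p k = (case p of Some t \<Rightarrow> t ^ k | None \<Rightarrow> (if k = 3 then 1 else 0))"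

definition cubic_code :: "('a::{field,finite} option \<Rightarrow> 'a) set" where
  "cubic_code = {c. \<forall>k<4. (\<Sum>p\<in>UNIV. c p * pcm_col p k) = 0}"

definition hweight :: "('i::finite \<Rightarrow> 'a::zero) \<Rightarrow> nat" where
  "hweight x = card {i. x i \<noteq> 0}"

definition coset :: "('a::{field,finite} option \<Rightarrow> 'a) \<Rightarrow> ('a option \<Rightarrow> 'a) set" where
  "coset v = {(\<lambda>p. v p + c p) | c. c \<in> cubic_code}"

definition coset_weight :: "('a::{zero,finite} option \<Rightarrow> 'a) set \<Rightarrow> nat" where
  "coset_weight V = Min (hweight ` V)"

definition B :: "nat \<Rightarrow> ('a::{zero,finite} option \<Rightarrow> 'a) set \<Rightarrow> nat" where
  "B w V = card {x \<in> V. hweight x = w}"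

end

theory Submission
  imports Defs "HOL-Computational_Algebra.Polynomial" "HOL-Library.FuncSet"
begin

text \<open>The code is MDS: a polynomial of degree at most 3 can vanish at any three of the
  columns (1,t,t^2,t^3), (0,0,0,1) (read as evaluation at t, resp. the coefficient of X^3)
  without vanishing at a fourth, so any four columns are independent and the minimum
  distance is 5. Hence for every set T of at least four coordinates the vectors of a coset
  supported in T are a translate of the codewords supported in T, and their number does not
  depend on the coset. Counting pairs (x, T) with supp x \<subseteq> T and |T| = t shows that the
  differences D_k = B_k(V) - B_k(V') of two cosets satisfy
  \<Sum>_k D_k C(q+1-k, t-k) = 0 for all t \<ge> 4. If V and V' have the same weight then
  D_0 = D_1 = D_2 = 0, since a coset contains at most one vector of weight at most 2.
  Binomial inversion gives D_k = (-1)^(k-3) C(q-2, k-3) D_3, and the symmetry of the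
  binomial coefficients turns this into D_(q+4-w) = (-1)^q D_w. So the identity holds for
  any two cosets of equal weight, whatever that weight is.\<close>

definition supp :: "('i \<Rightarrow> 'a::zero) \<Rightarrow> 'i set" where
  "supp x = {i. x i \<noteq> 0}"

lemma hweight_eq_card_supp: "hweight x = card (supp x)"
  by (simp add: hweight_def supp_def)

lemma hweight_diff_le:
  fixes x y :: "'i::finite \<Rightarrow> 'a::ab_group_add"
  shows "hweight (\<lambda>i. x i - y i) \<le> hweight x + hweight y"
proof -
  have "supp (\<lambda>i. x i - y i) \<subseteq> supp x \<union> supp y"
    by (auto simp: supp_def)
  then have "card (supp (\<lambda>i. x i - y i)) \<le> card (supp x \<union> supp y)"
    by (simp add: card_mono)
  also have "\<dots> \<le> card (supp x) + card (supp y)"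
    by (rule card_Un_le)
  finally show ?thesis
    by (simp add: hweight_eq_card_supp)
qed

lemma supp_add_subset:
  fixes x y :: "'i \<Rightarrow> 'a::monoid_add"
  shows "supp (\<lambda>i. x i + y i) \<subseteq> supp x \<union> supp y"
  by (auto simp: supp_def)

lemma card_supersets_of_card:
  fixes S :: "'i::finite set"
  assumes "card S \<le> t"
  shows "card {T. S \<subseteq> T \<and> card T = t} = (card (UNIV :: 'i set) - card S) choose (t - card S)"
proof -
  have "bij_betw (\<lambda>R. R \<union> S) {R. R \<subseteq> - S \<and> card R = t - card S} {T. S \<subseteq> T \<and> card T = t}"
  proof (rule bij_betw_byWitness[where f' = "\<lambda>T. T - S"])
    show "(\<lambda>R. R \<union> S) ` {R. R \<subseteq> - S \<and> card R = t - card S} \<subseteq> {T. S \<subseteq> T \<and> card T = t}"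
      using assms by (auto simp: card_Un_disjoint disjoint_eq_subset_Compl)
    show "(\<lambda>T. T - S) ` {T. S \<subseteq> T \<and> card T = t} \<subseteq> {R. R \<subseteq> - S \<and> card R = t - card S}"
      by (auto simp: card_Diff_subset)
  qed auto
  then have "card {T. S \<subseteq> T \<and> card T = t} = card {R. R \<subseteq> - S \<and> card R = t - card S}"
    by (simp add: bij_betw_same_card)
  also have "\<dots> = card (- S) choose (t - card S)"
    by (simp add: n_subsets)
  also have "card (- S) = card (UNIV :: 'i set) - card S"
    by (simp add: Compl_eq_Diff_UNIV card_Diff_subset)
  finally show ?thesis .
qed

lemma sum_card_supp_subset:
  fixes V :: "('i::finite \<Rightarrow> 'a::zero) set"
  assumes "finite V"
  shows "(\<Sum>T | card T = t. card {x\<in>V. supp x \<subseteq> T})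
       = (\<Sum>k\<le>t. card {x\<in>V. hweight x = k} * ((card (UNIV :: 'i set) - k) choose (t - k)))"
proof -
  have supersets: "card {T. supp x \<subseteq> T \<and> card T = t}
      = (if hweight x \<le> t then (card (UNIV :: 'i set) - hweight x) choose (t - hweight x) else 0)" for x :: "'i \<Rightarrow> 'a"
  proof (cases "hweight x \<le> t")
    case True
    then show ?thesis
      using card_supersets_of_card[of "supp x" t] by (simp add: hweight_eq_card_supp)
  next
    case False
    then have "{T. supp x \<subseteq> T \<and> card T = t} = {}"
      using card_mono[of _ "supp x"] by (force simp: hweight_eq_card_supp)
    then show ?thesis
      using False by simp
  qed
  have "(\<Sum>T | card T = t. card {x\<in>V. supp x \<subseteq> T}) = card (SIGMA T:{T. card T = t}. {x\<in>V. supp x \<subseteq> T})"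
    using assms by simp
  also have "\<dots> = card (prod.swap ` (SIGMA x:V. {T. supp x \<subseteq> T \<and> card T = t}))"
    by (rule arg_cong[where f = card]) (auto simp: image_iff)
  also have "\<dots> = (\<Sum>x\<in>V. card {T. supp x \<subseteq> T \<and> card T = t})"
    using assms by (simp add: card_image)
  also have "\<dots> = (\<Sum>x | x \<in> V \<and> hweight x \<le> t. (card (UNIV :: 'i set) - hweight x) choose (t - hweight x))"
    using assms by (simp add: supersets sum.inter_filter)
  also have "\<dots> = (\<Sum>k\<le>t. \<Sum>x | x \<in> V \<and> hweight x = k. (card (UNIV :: 'i set) - k) choose (t - k))"
    using assms by (subst sum.group[symmetric, of _ "{..t}" hweight]) (auto intro!: sum.cong arg_cong[where f = card])
  finally show ?thesis
    by simp
qed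

lemma sum_alternating_choose_mult:
  assumes "1 \<le> s" "s \<le> m"
  shows "(\<Sum>i\<le>s. (-1) ^ i * of_nat ((m choose i) * ((m - i) choose (s - i)))) = (0::'a::comm_ring_1)"
proof -
  have "(\<Sum>i\<le>s. (-1) ^ i * of_nat ((m choose i) * ((m - i) choose (s - i))))
      = (\<Sum>i\<le>s. of_nat (m choose s) * ((-1) ^ i * of_nat (s choose i)) :: 'a)"
  proof (rule sum.cong)
    fix i assume "i \<in> {..s}"
    then have "(m choose i) * ((m - i) choose (s - i)) = (m choose s) * (s choose i)"
      using choose_mult[of i s m] assms by simp
    then show "(-1) ^ i * of_nat ((m choose i) * ((m - i) choose (s - i)))
        = of_nat (m choose s) * ((-1) ^ i * of_nat (s choose i) :: 'a)"
      by (simp add: algebra_simps)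
  qed simp
  also have "\<dots> = of_nat (m choose s) * (\<Sum>i\<le>s. (-1) ^ i * of_nat (s choose i))"
    by (simp add: sum_distrib_left)
  also have "(\<Sum>i\<le>s. (-1) ^ i * of_nat (s choose i) :: 'a) = 0"
    using choose_alternating_sum[of s] assms by simp
  finally show ?thesis
    by simp
qed

lemma binomial_inversion_0:
  fixes E :: "nat \<Rightarrow> 'a::comm_ring_1"
  assumes rel: "\<And>t. 1 \<le> t \<Longrightarrow> t \<le> m \<Longrightarrow> (\<Sum>i\<le>t. E i * of_nat ((m - i) choose (t - i))) = 0"
  shows "s \<le> m \<Longrightarrow> E s = (-1) ^ s * of_nat (m choose s) * E 0"
proof (induction s rule: less_induct)
  case (less s)
  show ?case
  proof (cases "s = 0")
    case False
    then have s: "1 \<le> s" "s \<le> m"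
      using less.prems by auto
    have IH: "E i * of_nat ((m - i) choose (s - i))
        = (-1) ^ i * of_nat ((m choose i) * ((m - i) choose (s - i))) * E 0" if "i < s" for i
      using less.IH[of i] that s by (simp add: algebra_simps)
    have "0 = (\<Sum>i\<le>s. E i * of_nat ((m - i) choose (s - i)))"
      using rel[OF s] by simp
    also have "\<dots> = (\<Sum>i<s. E i * of_nat ((m - i) choose (s - i))) + E s"
      by (simp add: lessThan_Suc_atMost[symmetric])
    also have "(\<Sum>i<s. E i * of_nat ((m - i) choose (s - i)))
        = (\<Sum>i<s. (-1) ^ i * of_nat ((m choose i) * ((m - i) choose (s - i)))) * E 0"
      by (simp add: IH sum_distrib_right)
    also have "(\<Sum>i<s. (-1) ^ i * of_nat ((m choose i) * ((m - i) choose (s - i))) :: 'a)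
        = - ((-1) ^ s * of_nat (m choose s))"
      using sum_alternating_choose_mult[OF s, where 'a = 'a]
      by (simp add: lessThan_Suc_atMost[symmetric] eq_neg_iff_add_eq_0)
    finally show ?thesis
      by (simp add: algebra_simps eq_neg_iff_add_eq_0)
  qed simp
qed

lemma binomial_inversion:
  fixes D :: "nat \<Rightarrow> 'a::comm_ring_1"
  assumes below: "\<And>k. k < j \<Longrightarrow> D k = 0"
    and rel: "\<And>t. j < t \<Longrightarrow> t \<le> n \<Longrightarrow> (\<Sum>k\<le>t. D k * of_nat ((n - k) choose (t - k))) = 0"
    and "j \<le> k" "k \<le> n"
  shows "D k = (-1) ^ (k - j) * of_nat ((n - j) choose (k - j)) * D j"
proof -
  have shifted: "(\<Sum>i\<le>s. D (i + j) * of_nat ((n - j - i) choose (s - i))) = 0"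
    if "1 \<le> s" "s \<le> n - j" for s
  proof -
    have "{..s + j} = {..<j} \<union> {0 + j..s + j}"
      by auto
    then have "(\<Sum>k\<le>s + j. D k * of_nat ((n - k) choose (s + j - k)))
        = (\<Sum>k<j. D k * of_nat ((n - k) choose (s + j - k)))
          + (\<Sum>k = 0 + j..s + j. D k * of_nat ((n - k) choose (s + j - k)))"
      by (simp add: sum.union_disjoint ivl_disj_int)
    also have "\<dots> = (\<Sum>k = 0 + j..s + j. D k * of_nat ((n - k) choose (s + j - k)))"
      using below by simp
    also have "\<dots> = (\<Sum>i\<le>s. D (i + j) * of_nat ((n - j - i) choose (s - i)))"
      by (simp only: sum.shift_bounds_cl_nat_ivl atLeast0AtMost) (simp add: diff_diff_add add.commute)
    finally show ?thesis
      using rel[of "s + j"] that by simp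
  qed
  show ?thesis
    using binomial_inversion_0[of "n - j" "\<lambda>i. D (i + j)" "k - j", OF shifted] assms by simp
qed

lemma binomial_inversion_reflect:
  fixes D :: "nat \<Rightarrow> 'a::comm_ring_1"
  assumes D: "\<And>k. j \<le> k \<Longrightarrow> k \<le> n \<Longrightarrow> D k = (-1) ^ (k - j) * of_nat ((n - j) choose (k - j)) * D j"
    and k: "j \<le> k" "k \<le> n"
  shows "D (n + j - k) = (-1) ^ (n - j) * D k"
proof -
  define m a where "m = n - j" and "a = k - j"
  have a: "a \<le> m" "n + j - k - j = m - a"
    using k by (auto simp: m_def a_def)
  have sign: "(-1) ^ m * (-1) ^ a = ((-1) ^ (m - a) :: 'a)"
  proof -
    have "(-1) ^ m * (-1) ^ a = ((-1) ^ (m + a) :: 'a)"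
      by (simp add: power_add)
    also have "m + a = (m - a) + 2 * a"
      using a by simp
    also have "(-1) ^ ((m - a) + 2 * a) = ((-1) ^ (m - a) :: 'a)"
      by (simp add: power_add power_mult)
    finally show ?thesis .
  qed
  have "D (n + j - k) = (-1) ^ (m - a) * of_nat (m choose (m - a)) * D j"
    using D[of "n + j - k"] k a(2) by (simp add: m_def)
  also have "\<dots> = (-1) ^ m * ((-1) ^ a * of_nat (m choose a) * D j)"
    unfolding sign[symmetric] binomial_symmetric[OF a(1), symmetric] by (simp only: mult.assoc)
  also have "\<dots> = (-1) ^ (n - j) * D k"
    using D[of k] k by (simp add: m_def a_def)
  finally show ?thesis .
qed

definition syndrome :: "('a::field option \<Rightarrow> 'a) \<Rightarrow> nat \<Rightarrow> 'a" where
  "syndrome x k = (\<Sum>p\<in>UNIV. x p * pcm_col p k)"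

lemma syndrome_add: "syndrome (\<lambda>p. x p + y p) k = syndrome x k + syndrome y k"
  by (simp add: syndrome_def algebra_simps sum.distrib)

lemma syndrome_diff: "syndrome (\<lambda>p. x p - y p) k = syndrome x k - syndrome y k"
  by (simp add: syndrome_def algebra_simps sum_subtractf)

lemma cubic_code_iff_syndrome: "c \<in> cubic_code \<longleftrightarrow> (\<forall>k<4. syndrome c k = 0)"
  by (simp add: cubic_code_def syndrome_def)

lemma coset_iff_syndrome: "x \<in> coset u \<longleftrightarrow> (\<forall>k<4. syndrome x k = syndrome u k)"
proof
  assume "x \<in> coset u"
  then obtain c where "c \<in> cubic_code" "x = (\<lambda>p. u p + c p)"
    by (auto simp: coset_def)
  then show "\<forall>k<4. syndrome x k = syndrome u k"
    by (simp add: syndrome_add cubic_code_iff_syndrome)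
next
  assume "\<forall>k<4. syndrome x k = syndrome u k"
  then have "(\<lambda>p. x p - u p) \<in> cubic_code"
    by (simp add: syndrome_diff cubic_code_iff_syndrome)
  then show "x \<in> coset u"
    unfolding coset_def by (intro CollectI exI[of _ "\<lambda>p. x p - u p"]) simp
qed

definition pcm_eval :: "'a::field poly \<Rightarrow> 'a option \<Rightarrow> 'a" where
  "pcm_eval P p = (\<Sum>k<4. coeff P k * pcm_col p k)"

lemma pcm_eval_None: "pcm_eval P None = coeff P 3"
  by (simp add: pcm_eval_def pcm_col_def lessThan_nat_numeral)

lemma pcm_eval_Some:
  assumes "degree P \<le> 3"
  shows "pcm_eval P (Some t) = poly P t"
proof -
  have "poly P t = (\<Sum>i\<le>degree P. coeff P i * t ^ i)"
    by (rule poly_altdef)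
  also have "\<dots> = (\<Sum>i<4. coeff P i * t ^ i)"
    by (rule sum.mono_neutral_left) (use assms in \<open>auto simp: coeff_eq_0\<close>)
  finally show ?thesis
    by (simp add: pcm_eval_def pcm_col_def)
qed

lemma cubic_code_orthogonal:
  fixes c :: "'a::{field,finite} option \<Rightarrow> 'a"
  assumes "c \<in> cubic_code"
  shows "(\<Sum>p\<in>UNIV. c p * pcm_eval P p) = 0"
proof -
  have "(\<Sum>p\<in>UNIV. c p * pcm_eval P p) = (\<Sum>k<4. coeff P k * (\<Sum>p\<in>UNIV. c p * pcm_col p k))"
    by (simp add: pcm_eval_def sum_distrib_left sum.swap[of _ UNIV] algebra_simps)
  also have "\<dots> = 0"
    using assms by (simp add: cubic_code_def)
  finally show ?thesis .
qed

lemma cubic_separating_poly: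
  fixes S :: "'a::field option set"
  assumes "finite S" "card S \<le> 3" "p0 \<notin> S"
  obtains P where "degree P \<le> 3" "\<And>p. p \<in> S \<Longrightarrow> pcm_eval P p = 0" "pcm_eval P p0 \<noteq> 0"
proof -
  define F where "F = Some -` S"
  define Q where "Q = (\<Prod>t\<in>F. [:- t, 1:])"
  have "finite F"
    using assms(1) by (simp add: F_def finite_vimageI)
  then have degQ: "degree Q = card F" and rootsQ: "\<And>t. poly Q t = 0 \<longleftrightarrow> t \<in> F"
    by (simp_all add: Q_def degree_prod_eq_sum_degree poly_prod)
  have monicQ: "lead_coeff Q = 1"
    by (simp add: Q_def lead_coeff_prod)
  then have "Q \<noteq> 0"
    by auto
  have "card (Some ` F) \<le> card S"
    using assms(1) by (intro card_mono) (auto simp: F_def)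
  then have cardF: "card F \<le> card S"
    by (simp add: card_image)
  show thesis
  proof (cases p0)
    case None
    define P where "P = Q * [:0, 1:] ^ (3 - card F)"
    have "degree P = 3"
      using cardF assms(2) by (simp add: P_def degree_mult_eq \<open>Q \<noteq> 0\<close> degQ degree_linear_power)
    moreover have "lead_coeff P = 1"
      by (simp add: P_def lead_coeff_mult lead_coeff_power monicQ)
    moreover have "pcm_eval P p = 0" if p: "p \<in> S" for p
    proof -
      obtain t where "p = Some t" "t \<in> F"
        using p None assms(3) by (cases p) (auto simp: F_def)
      then show ?thesis
        using \<open>degree P = 3\<close> rootsQ by (simp add: pcm_eval_Some P_def)
    qed
    ultimately show thesis
      using None by (intro that[of P]) (auto simp: pcm_eval_None)
  next
    case (Some t0)
    have "pcm_eval Q p = 0" if "p \<in> S" for p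
    proof (cases p)
      case None
      have "insert None (Some ` F) \<subseteq> S"
        using that None by (auto simp: F_def)
      then have "card F + 1 \<le> card S"
        using assms(1) \<open>finite F\<close> card_mono[of S "insert None (Some ` F)"] by (simp add: card_image)
      then show ?thesis
        using assms(2) degQ by (simp add: None pcm_eval_None coeff_eq_0)
    next
      case (Some t)
      then show ?thesis
        using that cardF assms(2) degQ rootsQ by (simp add: pcm_eval_Some F_def)
    qed
    moreover have "pcm_eval Q p0 \<noteq> 0"
      using Some assms(3) cardF assms(2) degQ rootsQ by (simp add: pcm_eval_Some F_def)
    ultimately show thesis
      using cardF assms(2) degQ by (intro that[of Q]) auto
  qed
qed

lemma cubic_code_eq_0_if_hweight_le_4:
  fixes c :: "'a::{field,finite} option \<Rightarrow> 'a"
  assumes "c \<in> cubic_code" "hweight c \<le> 4"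
  shows "c p = 0"
proof (rule ccontr)
  assume "c p \<noteq> 0"
  then have card3: "card (supp c - {p}) \<le> 3"
    using assms(2) by (simp add: hweight_eq_card_supp supp_def)
  obtain P where P: "\<And>p'. p' \<in> supp c - {p} \<Longrightarrow> pcm_eval P p' = 0" "pcm_eval P p \<noteq> 0"
    by (rule cubic_separating_poly[of "supp c - {p}" p]) (use card3 in auto)
  have "0 = (\<Sum>p'\<in>UNIV. c p' * pcm_eval P p')"
    using cubic_code_orthogonal[OF assms(1)] by simp
  also have "\<dots> = (\<Sum>p'\<in>{p}. c p' * pcm_eval P p')"
    using P(1) by (intro sum.mono_neutral_right) (auto simp: supp_def)
  finally show False
    using \<open>c p \<noteq> 0\<close> P(2) by simp
qed

lemma coset_eq_if_hweight_add_le_4: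
  fixes x y :: "'a::{field,finite} option \<Rightarrow> 'a"
  assumes "x \<in> coset u" "y \<in> coset u" "hweight x + hweight y \<le> 4"
  shows "x = y"
proof
  fix p
  have "(\<lambda>p. x p - y p) \<in> cubic_code"
    using assms(1,2) by (simp add: coset_iff_syndrome cubic_code_iff_syndrome syndrome_diff)
  moreover have "hweight (\<lambda>p. x p - y p) \<le> 4"
    using hweight_diff_le[of x y] assms(3) by linarith
  ultimately show "x p = y p"
    using cubic_code_eq_0_if_hweight_le_4 by fastforce
qed

lemma B_coset_weight_le_2:
  fixes u :: "'a::{field,finite} option \<Rightarrow> 'a"
  assumes "k \<le> 2"
  shows "B k (coset u) = (if coset_weight (coset u) = k then 1 else 0)"
proof -
  let ?V = "coset u" and ?W = "coset_weight (coset u)"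
  have "u \<in> ?V"
    by (simp add: coset_iff_syndrome)
  then have "?W \<in> hweight ` ?V"
    unfolding coset_weight_def by (intro Min_in) auto
  then obtain x0 where x0: "x0 \<in> ?V" "hweight x0 = ?W"
    by auto
  have min: "?W \<le> hweight x" if "x \<in> ?V" for x
    using that by (simp add: coset_weight_def)
  have unique: "x = x0" if "x \<in> ?V" "hweight x = k" for x
    using that x0 min[OF that(1)] assms by (intro coset_eq_if_hweight_add_le_4[of x u x0]) auto
  have "{x\<in>?V. hweight x = k} = (if k = ?W then {x0} else {})"
    using x0 by (auto dest: unique)
  then show ?thesis
    by (simp add: B_def)
qed

lemma syndrome_surj_on_supp:
  fixes T :: "'a::{field,finite} option set"
  assumes "4 \<le> card T"
  obtains y where "supp y \<subseteq> T" "\<And>k. k < 4 \<Longrightarrow> syndrome y k = s k"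
proof -
  obtain A where A: "A \<subseteq> T" "card A = 4"
    using obtain_subset_with_card_n[OF assms] by blast
  define ext :: "('a option \<Rightarrow> 'a) \<Rightarrow> 'a option \<Rightarrow> 'a" where
    "ext g p = (if p \<in> A then g p else 0)" for g p
  define f where "f g = restrict (syndrome (ext g)) {..<4}" for g
  have supp_ext: "supp (ext g) \<subseteq> A" for g
    by (auto simp: supp_def ext_def)
  have "inj_on f (A \<rightarrow>\<^sub>E UNIV)"
  proof (rule inj_onI)
    fix g g' assume g: "g \<in> A \<rightarrow>\<^sub>E UNIV" "g' \<in> A \<rightarrow>\<^sub>E UNIV" "f g = f g'"
    have "syndrome (ext g) k = syndrome (ext g') k" if "k < 4" for k
      using fun_cong[OF g(3), of k] that by (simp add: f_def)
    then have "(\<lambda>p. ext g p - ext g' p) \<in> cubic_code"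
      by (simp add: cubic_code_iff_syndrome syndrome_diff)
    moreover have "supp (\<lambda>p. ext g p - ext g' p) \<subseteq> A"
      by (auto simp: supp_def ext_def)
    then have "hweight (\<lambda>p. ext g p - ext g' p) \<le> 4"
      using card_mono[OF finite] A(2) by (metis hweight_eq_card_supp)
    ultimately have "ext g p = ext g' p" for p
      using cubic_code_eq_0_if_hweight_le_4 by fastforce
    then show "g = g'"
      by (intro PiE_ext[OF g(1,2)]) (metis ext_def)
  qed
  moreover have "f ` (A \<rightarrow>\<^sub>E UNIV) \<subseteq> {..<4} \<rightarrow>\<^sub>E UNIV"
    unfolding f_def by (intro image_subsetI) (simp add: restrict_PiE_iff)
  moreover have "card (A \<rightarrow>\<^sub>E (UNIV :: 'a set)) = card ({..<4::nat} \<rightarrow>\<^sub>E (UNIV :: 'a set))"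
    using A(2) by (simp add: card_funcsetE)
  ultimately have "f ` (A \<rightarrow>\<^sub>E UNIV) = {..<4} \<rightarrow>\<^sub>E UNIV"
    by (intro card_subset_eq) (simp_all add: card_image finite_PiE)
  moreover have "restrict s {..<4} \<in> {..<4} \<rightarrow>\<^sub>E UNIV"
    by simp
  ultimately obtain g where g: "f g = restrict s {..<4}"
    by (metis imageE)
  have "syndrome (ext g) k = s k" if "k < 4" for k
    using fun_cong[OF g, of k] that by (simp add: f_def)
  then show thesis
    using that[of "ext g"] supp_ext[of g] A(1) by blast
qed

lemma card_coset_supp_subset_le:
  fixes u v :: "'a::{field,finite} option \<Rightarrow> 'a"
  assumes "4 \<le> card T"
  shows "card {x\<in>coset u. supp x \<subseteq> T} \<le> card {x\<in>coset v. supp x \<subseteq> T}"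
proof -
  obtain y where y: "supp y \<subseteq> T" "\<And>k. k < 4 \<Longrightarrow> syndrome y k = syndrome v k - syndrome u k"
    using syndrome_surj_on_supp[OF assms, where s = "\<lambda>k. syndrome v k - syndrome u k"] by blast
  have translate: "(\<lambda>p. x p + y p) \<in> {x\<in>coset v. supp x \<subseteq> T}"
    if "x \<in> coset u" "supp x \<subseteq> T" for x
  proof -
    have "\<forall>k<4. syndrome (\<lambda>p. x p + y p) k = syndrome v k"
      using that(1) y(2) by (simp add: coset_iff_syndrome syndrome_add)
    moreover have "supp (\<lambda>p. x p + y p) \<subseteq> T"
      using that(2) y(1) supp_add_subset[of x y] by blast
    ultimately show ?thesis
      by (simp add: coset_iff_syndrome)
  qed
  show ?thesis
  proof (rule card_inj_on_le)
    show "inj_on (\<lambda>x p. x p + y p) {x\<in>coset u. supp x \<subseteq> T}"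
      by (rule inj_onI) (simp add: fun_eq_iff)
    show "(\<lambda>x p. x p + y p) ` {x\<in>coset u. supp x \<subseteq> T} \<subseteq> {x\<in>coset v. supp x \<subseteq> T}"
      using translate by blast
  qed simp
qed

lemma card_coset_supp_subset_eq:
  fixes u v :: "'a::{field,finite} option \<Rightarrow> 'a"
  assumes "4 \<le> card T"
  shows "card {x\<in>coset u. supp x \<subseteq> T} = card {x\<in>coset v. supp x \<subseteq> T}"
  using card_coset_supp_subset_le[OF assms, where u = u and v = v]
    card_coset_supp_subset_le[OF assms, where u = v and v = u]
  by (rule le_antisym)

lemma B_reflection_eq_if_same_coset_weight:
  fixes u v :: "'a::{field,finite} option \<Rightarrow> 'a" and w :: nat
  defines "q \<equiv> card (UNIV :: 'a set)"
  assumes same_weight: "coset_weight (coset u) = coset_weight (coset v)"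
    and w: "3 \<le> w" "w \<le> q + 1"
  shows "int (B (q + 4 - w) (coset u)) - (-1) ^ q * int (B w (coset u)) =
         int (B (q + 4 - w) (coset v)) - (-1) ^ q * int (B w (coset v))"
proof -
  define n where "n = card (UNIV :: 'a option set)"
  have n: "n = q + 1"
    by (simp add: n_def q_def UNIV_option_conv card_image)
  define D where "D k = int (B k (coset u)) - int (B k (coset v))" for k
  have below: "D k = 0" if "k < 3" for k
    using that same_weight B_coset_weight_le_2[of k u] B_coset_weight_le_2[of k v] by (simp add: D_def)
  have rel: "(\<Sum>k\<le>t. D k * of_nat ((n - k) choose (t - k))) = 0" if "3 < t" for t
  proof -
    have "(\<Sum>k\<le>t. B k (coset u) * ((n - k) choose (t - k)))
        = (\<Sum>k\<le>t. B k (coset v) * ((n - k) choose (t - k)))"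
      using sum_card_supp_subset[of "coset u" t] sum_card_supp_subset[of "coset v" t]
        card_coset_supp_subset_eq[of _ u v] that
      by (simp add: B_def n_def)
    then show ?thesis
      by (simp add: D_def left_diff_distrib sum_subtractf flip: of_nat_mult of_nat_sum)
  qed
  have D: "D k = (-1) ^ (k - 3) * of_nat ((n - 3) choose (k - 3)) * D 3" if "3 \<le> k" "k \<le> n" for k
    using binomial_inversion[of 3 D n k] below rel that by simp
  have "D (n + 3 - w) = (-1) ^ (n - 3) * D w"
    by (rule binomial_inversion_reflect[where j = 3, OF D]) (use w n in auto)
  moreover have "(-1::int) ^ (n - 3) = (-1) ^ q"
  proof -
    have "q = (n - 3) + 2"
      using w n by simp
    then show ?thesis
      by (simp add: power_add)
  qed
  ultimately have "D (q + 4 - w) = (-1) ^ q * D w"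
    using n by (simp add: add.commute)
  then show ?thesis
    by (simp add: D_def algebra_simps)
qed

theorem theorem5p2:
  fixes w :: nat
  defines "q \<equiv> card (UNIV :: 'a::{field,finite} set)"
  assumes "q \<ge> 5"
    and "3 \<le> w" and "w \<le> (q + 3) div 2"
  shows "(\<forall>W::nat. ((W = 2 \<and> q mod 3 = 1) \<or> (W = 3 \<and> q mod 3 = 1) \<or> (W = 3 \<and> q mod 3 = 0)) \<longrightarrow>
            (\<forall>(u :: 'a option \<Rightarrow> 'a) (v :: 'a option \<Rightarrow> 'a).
               coset_weight (coset u) = W \<and> coset_weight (coset v) = W \<longrightarrow>
               int (B (q + 4 - w) (coset u)) - (-1) ^ q * int (B w (coset u)) =
               int (B (q + 4 - w) (coset v)) - (-1) ^ q * int (B w (coset v))))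
       \<and> (q mod 3 = 2 \<longrightarrow>
            (\<forall>(u :: 'a option \<Rightarrow> 'a) (v :: 'a option \<Rightarrow> 'a).
               coset_weight (coset u) = 3 \<and> coset_weight (coset v) = 3 \<longrightarrow>
               int (B (q + 4 - w) (coset u)) - (-1) ^ q * int (B w (coset u)) =
               int (B (q + 4 - w) (coset v)) - (-1) ^ q * int (B w (coset v))))"
proof -
  have "w \<le> q + 1"
    using assms(4) by linarith
  then have reflection: "int (B (q + 4 - w) (coset u)) - (-1) ^ q * int (B w (coset u)) =
      int (B (q + 4 - w) (coset v)) - (-1) ^ q * int (B w (coset v))"
    if "coset_weight (coset u) = coset_weight (coset v)" for u v :: "'a option \<Rightarrow> 'a"
    using B_reflection_eq_if_same_coset_weight[OF that assms(3)] by (simp add: q_def)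
  show ?thesis
    by (intro conjI allI impI; elim conjE; rule reflection; simp)
qed

end
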